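(* Let $u(x)=\sum_\alpha u_\alpha(x)\mathfrak{N}_\alpha$ with real-valued $u_\alpha\in L_2(U,\mu)$, only finitely many nonzero, and let $v=\sum_\alpha v_\alpha\mathfrak{N}_\alpha$ with real $v_\alpha$, only finitely many nonzero. Then $$\mathbf{E}[\delta(u)v]=\mathbf{E}\Big[\int_U u(x)\mathbb{D}v(x)d\mu\Big].$$
   Context: Setting: $(U,\mathcal{U},\mu)$ $\sigma$-finite complete measure space, $\{m_k\}$ a complete orthonormal system of $L_2(U,\mu)$; $\mathfrak{N}:L_2(U,\mu)\to L_2(\Omega,\mathbf{P})$ mean-zero linear isometry, $\xi_k=\mathfrak{N}(m_k)$. $J$: finitely supported multi-indices of nonnegative integers, $\alpha!=\prod\alpha_k!$, $\varepsilon_k$ unit multi-indices; $\{\mathfrak{N}_\alpha\}$ an orthogonal family in $L_2(\Omega)$ with $\mathbf{E}\mathfrak{N}_\alpha^2=\alpha!$, obtained by degreewise orthogonalization of monomials $\prod\xi_k^{\alpha_k}$. Skorokhod integral: $\delta(u)=\sum_\alpha\sum_k(\int_U u_\alpha m_kd\mu)\mathfrak{N}_{\alpha+\varepsilon_k}$. Malliavin derivative: $\mathbb{D}v(x)=\sum_\alpha\sum_k(\alpha_k+1)v_{\alpha+\varepsilon_k}m_k(x)\mathfrak{N}_\alpha$. *)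

theory Defs
  imports "HOL-Probability.Probability"
begin

definition multi_idx :: "(nat \<Rightarrow> nat) set" where
  "multi_idx = {\<alpha>. finite {k. \<alpha> k \<noteq> 0}}"

definition mfact :: "(nat \<Rightarrow> nat) \<Rightarrow> real" where
  "mfact \<alpha> = (\<Prod>k\<in>{k. \<alpha> k \<noteq> 0}. fact (\<alpha> k))"

definition add_unit :: "(nat \<Rightarrow> nat) \<Rightarrow> nat \<Rightarrow> (nat \<Rightarrow> nat)" where
  "add_unit \<alpha> k = \<alpha>(k := \<alpha> k + 1)"

definition L2 :: "'a measure \<Rightarrow> ('a \<Rightarrow> real) set" where
  "L2 M = {f. f \<in> borel_measurable M \<and> integrable M (\<lambda>x. (f x)\<^sup>2)}"

definition chaos_field ::
  "((nat \<Rightarrow> nat) \<Rightarrow> 'w \<Rightarrow> real) \<Rightarrow> ((nat \<Rightarrow> nat) \<Rightarrow> 'u \<Rightarrow> real) \<Rightarrow> 'u \<Rightarrow> 'w \<Rightarrow> real" where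
  "chaos_field N u x \<omega> = (\<Sum>\<alpha> | \<alpha> \<in> multi_idx \<and> u \<alpha> \<noteq> (\<lambda>_. 0). u \<alpha> x * N \<alpha> \<omega>)"

definition chaos_rv ::
  "((nat \<Rightarrow> nat) \<Rightarrow> 'w \<Rightarrow> real) \<Rightarrow> ((nat \<Rightarrow> nat) \<Rightarrow> real) \<Rightarrow> 'w \<Rightarrow> real" where
  "chaos_rv N v \<omega> = (\<Sum>\<alpha> | \<alpha> \<in> multi_idx \<and> v \<alpha> \<noteq> 0. v \<alpha> * N \<alpha> \<omega>)"

definition skorokhod_partial ::
  "'u measure \<Rightarrow> (nat \<Rightarrow> 'u \<Rightarrow> real) \<Rightarrow> ((nat \<Rightarrow> nat) \<Rightarrow> 'w \<Rightarrow> real) \<Rightarrow>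
   ((nat \<Rightarrow> nat) \<Rightarrow> 'u \<Rightarrow> real) \<Rightarrow> nat \<Rightarrow> 'w \<Rightarrow> real" where
  "skorokhod_partial M m N u n \<omega> =
     (\<Sum>\<alpha> | \<alpha> \<in> multi_idx \<and> u \<alpha> \<noteq> (\<lambda>_. 0).
        \<Sum>k<n. (\<integral>x. u \<alpha> x * m k x \<partial>M) * N (add_unit \<alpha> k) \<omega>)"

definition skorokhod ::
  "'u measure \<Rightarrow> 'w measure \<Rightarrow> (nat \<Rightarrow> 'u \<Rightarrow> real) \<Rightarrow> ((nat \<Rightarrow> nat) \<Rightarrow> 'w \<Rightarrow> real) \<Rightarrow>
   ((nat \<Rightarrow> nat) \<Rightarrow> 'u \<Rightarrow> real) \<Rightarrow> 'w \<Rightarrow> real" where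
  "skorokhod M P m N u = (SOME Y. Y \<in> L2 P \<and>
     (\<lambda>n. \<integral>\<omega>. (Y \<omega> - skorokhod_partial M m N u n \<omega>)\<^sup>2 \<partial>P) \<longlonglongrightarrow> 0)"

text \<open>Malliavin derivative Dv(x) = sum_alpha sum_k (alpha_k+1) v_(alpha+eps_k) m_k(x) N_alpha;
  only the finitely many pairs (alpha,k) with v_(alpha+eps_k) nonzero contribute.\<close>
definition malliavin ::
  "(nat \<Rightarrow> 'u \<Rightarrow> real) \<Rightarrow> ((nat \<Rightarrow> nat) \<Rightarrow> 'w \<Rightarrow> real) \<Rightarrow> ((nat \<Rightarrow> nat) \<Rightarrow> real) \<Rightarrow> 'u \<Rightarrow> 'w \<Rightarrow> real" where
  "malliavin m N v x \<omega> =
     (\<Sum>(\<alpha>, k) | \<alpha> \<in> multi_idx \<and> v (add_unit \<alpha> k) \<noteq> 0.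
        real (\<alpha> k + 1) * v (add_unit \<alpha> k) * m k x * N \<alpha> \<omega>)"

end

(*
  Both sides reduce to the same finite sum, over the pairs (alpha, k) with u_alpha <> 0 and
  v_(alpha + eps_k) <> 0, of (int u_alpha m_k dmu) v_(alpha + eps_k) (alpha + eps_k)!:
  on the right because the family N_alpha is orthogonal with E N_alpha^2 = alpha!, on the left
  because the pairing of v with the partial sums of the Skorokhod series is eventually constant.
  What needs an argument is that delta(u) exists: since (alpha + eps_k)! <= alpha! (1 + |alpha|)
  uniformly in k, Bessel's inequality for {m_k} makes the partial sums Cauchy in L2(P); they
  converge by the Riesz-Fischer argument, and pairing with v is continuous in L2(P).
*)
theory Submission
  imports Defs
begin

section \<open>Square-integrable functions\<close>

lemma L2_square_integrable: "f \<in> L2 M \<Longrightarrow> integrable M (\<lambda>x. (f x)\<^sup>2)"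
  by (simp add: L2_def)

lemma abs_mult_le_weighted_squares:
  fixes a b t :: real
  assumes "t > 0"
  shows "\<bar>a * b\<bar> \<le> (t * a\<^sup>2 + b\<^sup>2 / t) / 2"
proof -
  have "0 \<le> (t * \<bar>a\<bar> - \<bar>b\<bar>)\<^sup>2" by simp
  hence "2 * t * \<bar>a * b\<bar> \<le> t\<^sup>2 * a\<^sup>2 + b\<^sup>2"
    by (simp add: power2_eq_square algebra_simps abs_mult)
  with assms show ?thesis
    by (simp add: field_simps power2_eq_square)
qed

lemma L2_mult_integrable:
  assumes "f \<in> L2 M" "g \<in> L2 M"
  shows "integrable M (\<lambda>x. f x * g x)"
proof (rule Bochner_Integration.integrable_bound)
  show "integrable M (\<lambda>x. (f x)\<^sup>2 + (g x)\<^sup>2)"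
    using assms by (simp add: L2_square_integrable)
  have "\<bar>f x * g x\<bar> \<le> (f x)\<^sup>2 + (g x)\<^sup>2" for x
    using abs_mult_le_weighted_squares[of 1 "f x" "g x"] by simp
  then show "AE x in M. norm (f x * g x) \<le> norm ((f x)\<^sup>2 + (g x)\<^sup>2)"
    by simp
qed (use assms in \<open>auto simp: L2_def\<close>)

lemma L2_add:
  assumes "f \<in> L2 M" "g \<in> L2 M"
  shows "(\<lambda>x. f x + g x) \<in> L2 M"
proof -
  have "integrable M (\<lambda>x. (f x)\<^sup>2 + (g x)\<^sup>2 + 2 * (f x * g x))"
    using assms by (simp add: L2_mult_integrable L2_square_integrable)
  with assms show ?thesis
    by (simp add: L2_def power2_sum mult.assoc borel_measurable_add)
qed

lemma L2_cmult: "f \<in> L2 M \<Longrightarrow> (\<lambda>x. c * f x) \<in> L2 M"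
  by (simp add: L2_def power_mult_distrib borel_measurable_times)

lemma L2_diff: "f \<in> L2 M \<Longrightarrow> g \<in> L2 M \<Longrightarrow> (\<lambda>x. f x - g x) \<in> L2 M"
  using L2_add[of f M "\<lambda>x. - 1 * g x"] L2_cmult[of g M "- 1"] by simp

lemma L2_sum:
  "finite I \<Longrightarrow> (\<And>i. i \<in> I \<Longrightarrow> f i \<in> L2 M) \<Longrightarrow> (\<lambda>x. \<Sum>i\<in>I. f i x) \<in> L2 M"
proof (induction I rule: finite_induct)
  case empty
  show ?case by (simp add: L2_def)
qed (simp add: L2_add)

lemma integral_abs_mult_le:
  assumes "f \<in> L2 M" "g \<in> L2 M" "t > 0"
  shows "(\<integral>x. \<bar>f x * g x\<bar> \<partial>M) \<le> (t * (\<integral>x. (f x)\<^sup>2 \<partial>M) + (\<integral>x. (g x)\<^sup>2 \<partial>M) / t) / 2"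
proof -
  have "(\<integral>x. \<bar>f x * g x\<bar> \<partial>M) \<le> (\<integral>x. (t * (f x)\<^sup>2 + (g x)\<^sup>2 / t) / 2 \<partial>M)"
    using assms by (intro integral_mono abs_mult_le_weighted_squares)
      (auto simp: L2_mult_integrable L2_square_integrable)
  also have "\<dots> = (t * (\<integral>x. (f x)\<^sup>2 \<partial>M) + (\<integral>x. (g x)\<^sup>2 \<partial>M) / t) / 2"
    using assms by (simp add: L2_square_integrable)
  finally show ?thesis .
qed

lemma (in prob_space) integral_abs_le_L2:
  assumes "f \<in> L2 M" "t > 0"
  shows "integrable M (\<lambda>x. \<bar>f x\<bar>)" "(\<integral>x. \<bar>f x\<bar> \<partial>M) \<le> (t * (\<integral>x. (f x)\<^sup>2 \<partial>M) + 1 / t) / 2"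
proof -
  have one: "(\<lambda>_. 1) \<in> L2 M" by (simp add: L2_def)
  show "integrable M (\<lambda>x. \<bar>f x\<bar>)"
    using L2_mult_integrable[OF assms(1) one] by simp
  show "(\<integral>x. \<bar>f x\<bar> \<partial>M) \<le> (t * (\<integral>x. (f x)\<^sup>2 \<partial>M) + 1 / t) / 2"
    using integral_abs_mult_le[OF assms(1) one assms(2)] by (simp add: prob_space)
qed

lemma L2_inner_tendsto:
  assumes S: "\<And>n. S n \<in> L2 M" and Y: "Y \<in> L2 M" and V: "V \<in> L2 M"
    and lim: "(\<lambda>n. \<integral>x. (Y x - S n x)\<^sup>2 \<partial>M) \<longlonglongrightarrow> 0"
  shows "(\<lambda>n. \<integral>x. S n x * V x \<partial>M) \<longlonglongrightarrow> (\<integral>x. Y x * V x \<partial>M)"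
proof -
  define D where "D n = (\<integral>x. (Y x - S n x)\<^sup>2 \<partial>M)" for n
  define Q where "Q = (\<integral>x. (V x)\<^sup>2 \<partial>M)"
  have YS: "(\<lambda>x. Y x - S n x) \<in> L2 M" for n by (intro L2_diff Y S)
  have gap: "\<bar>(\<integral>x. Y x * V x \<partial>M) - (\<integral>x. S n x * V x \<partial>M)\<bar> \<le> (t * D n + Q / t) / 2"
    if "t > 0" for t n
  proof -
    have "(\<integral>x. Y x * V x \<partial>M) - (\<integral>x. S n x * V x \<partial>M) = (\<integral>x. (Y x - S n x) * V x \<partial>M)"
      using assms by (simp add: L2_mult_integrable left_diff_distrib)
    also have "\<bar>\<dots>\<bar> \<le> (\<integral>x. \<bar>(Y x - S n x) * V x\<bar> \<partial>M)"
      by (rule integral_abs_bound)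
    also have "\<dots> \<le> (t * D n + Q / t) / 2"
      unfolding D_def Q_def by (rule integral_abs_mult_le[OF YS V that])
    finally show ?thesis .
  qed
  show ?thesis
  proof (rule LIMSEQ_I)
    fix e :: real assume e: "0 < e"
    have Q: "Q \<ge> 0" unfolding Q_def by simp
    define t where "t = (Q + 1) / e"
    have t: "t > 0" "Q / t < e" using Q e by (auto simp: t_def field_simps)
    obtain n0 where "\<And>n. n \<ge> n0 \<Longrightarrow> \<bar>D n\<bar> < e / t"
      using LIMSEQ_D[OF lim[folded D_def], of "e / t"] e t by auto
    hence tD: "t * D n < e" if "n \<ge> n0" for n
      using that t(1) by (simp add: D_def field_simps)
    have "\<bar>(\<integral>x. Y x * V x \<partial>M) - (\<integral>x. S n x * V x \<partial>M)\<bar> < e" if "n \<ge> n0" for n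
      using gap[OF t(1), of n] t(2) tD[OF that] by argo
    thus "\<exists>n0. \<forall>n\<ge>n0. norm ((\<integral>x. S n x * V x \<partial>M) - (\<integral>x. Y x * V x \<partial>M)) < e"
      by (metis abs_minus_commute real_norm_def)
  qed
qed

lemma (in prob_space) L1_Cauchy_if_L2_Cauchy:
  assumes f: "\<And>n. f n \<in> L2 M"
    and Cauchy: "\<And>e. e > 0 \<Longrightarrow> \<exists>N. \<forall>n\<ge>N. \<forall>p\<ge>N. (\<integral>x. (f p x - f n x)\<^sup>2 \<partial>M) < e"
    and e: "e > 0"
  shows "\<exists>N. \<forall>n\<ge>N. \<forall>p\<ge>N. (\<integral>x. norm (f n x - f p x) \<partial>M) < e"
proof -
  obtain N where N: "\<And>n p. n \<ge> N \<Longrightarrow> p \<ge> N \<Longrightarrow> (\<integral>x. (f p x - f n x)\<^sup>2 \<partial>M) < e\<^sup>2"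
    using Cauchy[of "e\<^sup>2"] e by auto
  have "(\<integral>x. \<bar>f n x - f p x\<bar> \<partial>M) < e" if "n \<ge> N" "p \<ge> N" for n p
  proof -
    have "(\<integral>x. \<bar>f n x - f p x\<bar> \<partial>M) \<le> (1 / e * (\<integral>x. (f n x - f p x)\<^sup>2 \<partial>M) + 1 / (1 / e)) / 2"
      using e by (intro integral_abs_le_L2 L2_diff f) simp
    also have "\<dots> < (1 / e * e\<^sup>2 + e) / 2"
      using N[OF that(2,1)] e by (intro divide_strict_right_mono add_strict_right_mono) (simp_all add: divide_strict_right_mono)
    also have "\<dots> = e"
      using e by (simp add: power2_eq_square)
    finally show ?thesis .
  qed
  then show ?thesis by auto
qed

lemma integral_sq_diff_le_if_AE_tendsto:
  assumes f: "\<And>j. f j \<in> L2 M" and g: "g \<in> L2 M" and Y: "Y \<in> borel_measurable M"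
    and lim: "AE x in M. (\<lambda>j. f j x) \<longlonglongrightarrow> Y x"
    and bound: "eventually (\<lambda>j. (\<integral>x. (f j x - g x)\<^sup>2 \<partial>M) \<le> e) sequentially"
  shows "integrable M (\<lambda>x. (Y x - g x)\<^sup>2)" "(\<integral>x. (Y x - g x)\<^sup>2 \<partial>M) \<le> e"
proof -
  have [measurable]: "f j \<in> borel_measurable M" "g \<in> borel_measurable M" "Y \<in> borel_measurable M" for j
    using f g Y by (auto simp: L2_def)
  have sq: "integrable M (\<lambda>x. (f j x - g x)\<^sup>2)" for j
    using L2_diff[OF f g] by (simp add: L2_def)
  have "(\<integral>\<^sup>+x. ennreal ((Y x - g x)\<^sup>2) \<partial>M) = (\<integral>\<^sup>+x. liminf (\<lambda>j. ennreal ((f j x - g x)\<^sup>2)) \<partial>M)"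
  proof (intro nn_integral_cong_AE, use lim in eventually_elim)
    case (elim x)
    have "(\<lambda>j. ennreal ((f j x - g x)\<^sup>2)) \<longlonglongrightarrow> ennreal ((Y x - g x)\<^sup>2)"
      using elim by (intro tendsto_intros)
    then show ?case
      by (intro lim_imp_Liminf[symmetric]) auto
  qed
  also have "\<dots> \<le> liminf (\<lambda>j. \<integral>\<^sup>+x. ennreal ((f j x - g x)\<^sup>2) \<partial>M)"
    by (rule nn_integral_liminf) measurable
  also have "\<dots> = liminf (\<lambda>j. ennreal (\<integral>x. (f j x - g x)\<^sup>2 \<partial>M))"
    by (simp add: nn_integral_eq_integral[OF sq])
  also have "\<dots> \<le> ennreal e"
  proof (rule Liminf_le)
    show "\<forall>\<^sub>F j in sequentially. ennreal (\<integral>x. (f j x - g x)\<^sup>2 \<partial>M) \<le> ennreal e"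
      using bound by eventually_elim (rule ennreal_leI)
  qed simp
  finally have nn: "(\<integral>\<^sup>+x. ennreal ((Y x - g x)\<^sup>2) \<partial>M) \<le> ennreal e" .
  show int: "integrable M (\<lambda>x. (Y x - g x)\<^sup>2)"
  proof (rule integrableI_bounded)
    show "(\<integral>\<^sup>+x. ennreal (norm ((Y x - g x)\<^sup>2)) \<partial>M) < \<infinity>"
      using nn by (simp add: order.strict_trans1)
  qed measurable
  obtain j where "(\<integral>x. (f j x - g x)\<^sup>2 \<partial>M) \<le> e"
    using bound by (auto simp: eventually_sequentially)
  moreover have "(\<integral>x. (f j x - g x)\<^sup>2 \<partial>M) \<ge> 0"
    by (simp add: integral_nonneg_AE)
  ultimately have "e \<ge> 0"
    by linarith
  moreover have "ennreal (\<integral>x. (Y x - g x)\<^sup>2 \<partial>M) \<le> ennreal e"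
    using nn by (simp add: nn_integral_eq_integral[OF int])
  ultimately show "(\<integral>x. (Y x - g x)\<^sup>2 \<partial>M) \<le> e"
    by (auto simp: ennreal_le_iff2)
qed

lemma (in prob_space) L2_Cauchy_AE_convergent_subseq:
  fixes f :: "nat \<Rightarrow> 'a \<Rightarrow> real"
  assumes f: "\<And>n. f n \<in> L2 M"
    and Cauchy: "\<And>e. e > 0 \<Longrightarrow> \<exists>N. \<forall>n\<ge>N. \<forall>p\<ge>N. (\<integral>x. (f p x - f n x)\<^sup>2 \<partial>M) < e"
  shows "\<exists>r Y. strict_mono r \<and> Y \<in> borel_measurable M \<and> (AE x in M. (\<lambda>i. f (r i) x) \<longlonglongrightarrow> Y x)"
proof -
  have [measurable]: "f n \<in> borel_measurable M" for n
    using f by (simp add: L2_def)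
  have "integrable M (f n)" for n
    using f by (auto simp: L2_def intro: square_integrable_imp_integrable)
  then obtain r where r: "strict_mono r" and AE_Cauchy: "AE x in M. Cauchy (\<lambda>i. f (r i) x)"
    by (rule cauchy_L1_AE_cauchy_subseq[OF _ L1_Cauchy_if_L2_Cauchy[OF f Cauchy]])
  define Y where "Y x = lim (\<lambda>i. f (r i) x)" for x
  have "Y \<in> borel_measurable M"
    unfolding Y_def by measurable
  moreover have "AE x in M. (\<lambda>i. f (r i) x) \<longlonglongrightarrow> Y x"
    using AE_Cauchy by eventually_elim (simp add: Y_def Cauchy_convergent_iff convergent_LIMSEQ_iff)
  ultimately show ?thesis
    using r by blast
qed

lemma (in prob_space) L2_Cauchy_imp_convergent:
  fixes f :: "nat \<Rightarrow> 'a \<Rightarrow> real"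
  assumes f: "\<And>n. f n \<in> L2 M"
    and Cauchy: "\<And>e. e > 0 \<Longrightarrow> \<exists>N. \<forall>n\<ge>N. \<forall>p\<ge>N. (\<integral>x. (f p x - f n x)\<^sup>2 \<partial>M) < e"
  shows "\<exists>Y. Y \<in> L2 M \<and> (\<lambda>n. \<integral>x. (Y x - f n x)\<^sup>2 \<partial>M) \<longlonglongrightarrow> 0"
proof -
  have [measurable]: "f n \<in> borel_measurable M" for n
    using f by (simp add: L2_def)
  obtain r Y where r: "strict_mono r" and Y[measurable]: "Y \<in> borel_measurable M"
    and lim: "AE x in M. (\<lambda>i. f (r i) x) \<longlonglongrightarrow> Y x"
    using L2_Cauchy_AE_convergent_subseq[OF f Cauchy] by blast
  have close: "integrable M (\<lambda>x. (Y x - f n x)\<^sup>2) \<and> (\<integral>x. (Y x - f n x)\<^sup>2 \<partial>M) \<le> e"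
    if N: "\<forall>n\<ge>N. \<forall>p\<ge>N. (\<integral>x. (f p x - f n x)\<^sup>2 \<partial>M) < e" and n: "n \<ge> N" for n N e
  proof -
    have "eventually (\<lambda>i. (\<integral>x. (f (r i) x - f n x)\<^sup>2 \<partial>M) \<le> e) sequentially"
    proof (rule eventually_sequentiallyI)
      fix i
      assume "N \<le> i"
      then have "N \<le> r i"
        using seq_suble[OF r, of i] by simp
      with N n have "(\<integral>x. (f (r i) x - f n x)\<^sup>2 \<partial>M) < e"
        by blast
      then show "(\<integral>x. (f (r i) x - f n x)\<^sup>2 \<partial>M) \<le> e"
        by (rule less_imp_le)
    qed
    then show ?thesis
      using integral_sq_diff_le_if_AE_tendsto[where f="\<lambda>i. f (r i)" and g="f n", OF f f Y lim]
      by blast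
  qed
  obtain N0 where "\<forall>n\<ge>N0. \<forall>p\<ge>N0. (\<integral>x. (f p x - f n x)\<^sup>2 \<partial>M) < 1"
    using Cauchy[of 1] by auto
  then have "integrable M (\<lambda>x. (Y x - f N0 x)\<^sup>2)"
    using close[of N0 1 N0] by blast
  then have "(\<lambda>x. (Y x - f N0 x) + f N0 x) \<in> L2 M"
    by (intro L2_add f) (simp add: L2_def)
  then have "Y \<in> L2 M"
    by simp
  moreover have "(\<lambda>n. \<integral>x. (Y x - f n x)\<^sup>2 \<partial>M) \<longlonglongrightarrow> 0"
  proof (rule LIMSEQ_I)
    fix e :: real
    assume "e > 0"
    then obtain N where N: "\<forall>n\<ge>N. \<forall>p\<ge>N. (\<integral>x. (f p x - f n x)\<^sup>2 \<partial>M) < e / 2"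
      using Cauchy[of "e / 2"] by auto
    show "\<exists>N. \<forall>n\<ge>N. norm ((\<integral>x. (Y x - f n x)\<^sup>2 \<partial>M) - 0) < e"
    proof (intro exI allI impI)
      fix n
      assume "N \<le> n"
      then have "(\<integral>x. (Y x - f n x)\<^sup>2 \<partial>M) \<le> e / 2"
        using close[OF N \<open>N \<le> n\<close>] by blast
      with \<open>e > 0\<close> show "norm ((\<integral>x. (Y x - f n x)\<^sup>2 \<partial>M) - 0) < e"
        by simp
    qed
  qed
  ultimately show ?thesis by blast
qed

lemma Bessel_inequality:
  fixes m :: "nat \<Rightarrow> 'a \<Rightarrow> real"
  assumes m: "\<And>k. m k \<in> L2 M"
    and orth: "\<And>k j. (\<integral>x. m k x * m j x \<partial>M) = (if k = j then 1 else 0)"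
    and f: "f \<in> L2 M"
  shows "(\<Sum>k<n. (\<integral>x. f x * m k x \<partial>M)\<^sup>2) \<le> (\<integral>x. (f x)\<^sup>2 \<partial>M)"
proof -
  define c where "c k = (\<integral>x. f x * m k x \<partial>M)" for k
  have "(\<lambda>x. f x - (\<Sum>k<n. c k * m k x)) \<in> L2 M"
    using f m by (intro L2_diff L2_sum L2_cmult finite_lessThan) auto
  then have "0 \<le> (\<integral>x. (f x - (\<Sum>k<n. c k * m k x))\<^sup>2 \<partial>M)"
    by (simp add: integral_nonneg_AE)
  also have "\<dots> = (\<integral>x. (f x)\<^sup>2 - 2 * (\<Sum>k<n. c k * (f x * m k x))
      + (\<Sum>k<n. \<Sum>j<n. c k * c j * (m k x * m j x)) \<partial>M)"
    by (simp add: power2_diff power2_eq_square sum_product sum_distrib_left algebra_simps)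
  also have "\<dots> = (\<integral>x. (f x)\<^sup>2 \<partial>M) - 2 * (\<Sum>k<n. c k * c k) + (\<Sum>k<n. \<Sum>j<n. c k * c j * (if k = j then 1 else 0))"
    using f m by (simp add: L2_square_integrable L2_mult_integrable orth c_def[symmetric])
  also have "\<dots> = (\<integral>x. (f x)\<^sup>2 \<partial>M) - (\<Sum>k<n. (c k)\<^sup>2)"
    by (simp add: if_distrib power2_eq_square cong: if_cong)
  finally show ?thesis
    by (simp add: c_def)
qed

lemma summable_Fourier_coefficients_sq:
  fixes m :: "nat \<Rightarrow> 'a \<Rightarrow> real"
  assumes "\<And>k. m k \<in> L2 M"
    and "\<And>k j. (\<integral>x. m k x * m j x \<partial>M) = (if k = j then 1 else 0)"
    and "f \<in> L2 M"
  shows "summable (\<lambda>k. (\<integral>x. f x * m k x \<partial>M)\<^sup>2)"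
proof (rule bounded_imp_summable)
  show "(\<Sum>k\<le>n. (\<integral>x. f x * m k x \<partial>M)\<^sup>2) \<le> (\<integral>x. (f x)\<^sup>2 \<partial>M)" for n
    using Bessel_inequality[OF assms, of "Suc n"] by (simp add: lessThan_Suc_atMost)
qed simp

section \<open>Multi-indices\<close>

lemma add_unit_in_multi_idx: "\<alpha> \<in> multi_idx \<Longrightarrow> add_unit \<alpha> k \<in> multi_idx"
proof -
  assume "\<alpha> \<in> multi_idx"
  moreover have "{j. add_unit \<alpha> k j \<noteq> 0} \<subseteq> insert k {j. \<alpha> j \<noteq> 0}"
    by (auto simp: add_unit_def)
  ultimately show ?thesis
    by (auto simp: multi_idx_def intro: finite_subset)
qed

lemma add_unit_same [simp]: "add_unit \<alpha> k k = \<alpha> k + 1"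
  by (simp add: add_unit_def)

lemma add_unit_eq_add_unit_iff [simp]: "add_unit \<alpha> k = add_unit \<alpha> j \<longleftrightarrow> k = j"
  by (metis add_unit_def fun_upd_apply n_not_Suc_n Suc_eq_plus1)

lemma add_unit_cancel: "add_unit \<alpha> k = add_unit \<beta> k \<Longrightarrow> \<alpha> = \<beta>"
  by (metis add_unit_def add_right_cancel fun_upd_idem_iff fun_upd_upd)

lemma mfact_pos: "mfact \<alpha> > 0"
  unfolding mfact_def by (rule prod_pos) auto

lemma mfact_add_unit:
  assumes "\<alpha> \<in> multi_idx"
  shows "mfact (add_unit \<alpha> k) = mfact \<alpha> * real (\<alpha> k + 1)"
proof -
  define S where "S = {j. \<alpha> j \<noteq> 0}"
  have S: "finite S"
    using assms by (simp add: S_def multi_idx_def)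
  have rest: "(\<Prod>j\<in>S - {k}. fact (add_unit \<alpha> k j)) = (\<Prod>j\<in>S - {k}. (fact (\<alpha> j) :: real))"
    by (intro prod.cong) (auto simp: add_unit_def)
  have "mfact \<alpha> = (\<Prod>j\<in>S. fact (\<alpha> j))"
    by (simp add: mfact_def S_def)
  also have "\<dots> = fact (\<alpha> k) * (\<Prod>j\<in>S - {k}. fact (\<alpha> j))"
    using S by (cases "k \<in> S") (simp_all add: prod.remove S_def)
  finally have "mfact \<alpha> = fact (\<alpha> k) * (\<Prod>j\<in>S - {k}. fact (\<alpha> j))" .
  moreover have "{j. add_unit \<alpha> k j \<noteq> 0} = insert k S"
    by (auto simp: add_unit_def S_def)
  ultimately show ?thesis
    using S rest by (simp add: mfact_def prod.insert_remove add_unit_def algebra_simps)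
qed

definition mfact_bound :: "(nat \<Rightarrow> nat) \<Rightarrow> real" where
  "mfact_bound \<alpha> = mfact \<alpha> * (1 + (\<Sum>j\<in>{j. \<alpha> j \<noteq> 0}. real (\<alpha> j)))"

lemma mfact_add_unit_le:
  assumes "\<alpha> \<in> multi_idx"
  shows "mfact (add_unit \<alpha> k) \<le> mfact_bound \<alpha>"
proof -
  have "real (\<alpha> k) \<le> (\<Sum>j\<in>{j. \<alpha> j \<noteq> 0}. real (\<alpha> j))"
    using assms by (cases "\<alpha> k = 0") (auto simp: multi_idx_def intro!: member_le_sum sum_nonneg)
  then show ?thesis
    using mfact_pos[of \<alpha>] by (simp add: mfact_add_unit[OF assms] mfact_bound_def)
qed

definition malliavin_support :: "((nat \<Rightarrow> nat) \<Rightarrow> real) \<Rightarrow> ((nat \<Rightarrow> nat) \<times> nat) set" where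
  "malliavin_support v = {(\<alpha>, k). \<alpha> \<in> multi_idx \<and> v (add_unit \<alpha> k) \<noteq> 0}"

lemma finite_malliavin_support:
  assumes "finite {\<beta> \<in> multi_idx. v \<beta> \<noteq> 0}"
  shows "finite (malliavin_support v)"
proof -
  let ?raise = "\<lambda>(\<alpha>, k). (add_unit \<alpha> k, k)"
  have "?raise ` malliavin_support v \<subseteq> (SIGMA \<beta>:{\<beta> \<in> multi_idx. v \<beta> \<noteq> 0}. {k. \<beta> k \<noteq> 0})"
    by (auto simp: malliavin_support_def add_unit_in_multi_idx)
  moreover have "finite (SIGMA \<beta>:{\<beta> \<in> multi_idx. v \<beta> \<noteq> 0}. {k. \<beta> k \<noteq> 0})"
    using assms by (intro finite_SigmaI) (auto simp: multi_idx_def)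
  moreover have "inj_on ?raise (malliavin_support v)"
    by (auto simp: inj_on_def dest: add_unit_cancel)
  ultimately show ?thesis
    by (meson finite_imageD finite_subset)
qed

section \<open>Orthogonal chaos expansions\<close>

locale orthogonal_chaos = prob_space P for P :: "'w measure" +
  fixes N :: "(nat \<Rightarrow> nat) \<Rightarrow> 'w \<Rightarrow> real"
  assumes N_L2: "\<And>\<alpha>. \<alpha> \<in> multi_idx \<Longrightarrow> N \<alpha> \<in> L2 P"
    and N_orth: "\<And>\<alpha> \<beta>. \<alpha> \<in> multi_idx \<Longrightarrow> \<beta> \<in> multi_idx \<Longrightarrow>
          (\<integral>\<omega>. N \<alpha> \<omega> * N \<beta> \<omega> \<partial>P) = (if \<alpha> = \<beta> then mfact \<alpha> else 0)"
begin

lemma chaos_sum_L2: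
  assumes "finite I" "\<And>i. i \<in> I \<Longrightarrow> a i \<in> multi_idx"
  shows "(\<lambda>\<omega>. \<Sum>i\<in>I. c i * N (a i) \<omega>) \<in> L2 P"
  using assms by (intro L2_sum L2_cmult N_L2)

lemma integral_chaos_bilinear:
  assumes "finite I" "finite J" "\<And>i. i \<in> I \<Longrightarrow> a i \<in> multi_idx" "\<And>j. j \<in> J \<Longrightarrow> b j \<in> multi_idx"
  shows "(\<integral>\<omega>. (\<Sum>i\<in>I. \<Sum>j\<in>J. c i j * (N (a i) \<omega> * N (b j) \<omega>)) \<partial>P)
       = (\<Sum>i\<in>I. \<Sum>j\<in>J. c i j * (if a i = b j then mfact (a i) else 0))"
  using assms by (simp add: Bochner_Integration.integral_sum integrable_sum L2_mult_integrable N_L2 N_orth)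

lemma integral_chaos_sum_mult_chaos_rv:
  assumes I: "finite I" "\<And>i. i \<in> I \<Longrightarrow> a i \<in> multi_idx"
    and v: "finite {\<beta> \<in> multi_idx. v \<beta> \<noteq> 0}"
  shows "(\<integral>\<omega>. (\<Sum>i\<in>I. c i * N (a i) \<omega>) * chaos_rv N v \<omega> \<partial>P) = (\<Sum>i\<in>I. c i * v (a i) * mfact (a i))"
proof -
  let ?B = "{\<beta> \<in> multi_idx. v \<beta> \<noteq> 0}"
  have "(\<integral>\<omega>. (\<Sum>i\<in>I. c i * N (a i) \<omega>) * chaos_rv N v \<omega> \<partial>P)
      = (\<integral>\<omega>. (\<Sum>i\<in>I. \<Sum>\<beta>\<in>?B. c i * v \<beta> * (N (a i) \<omega> * N \<beta> \<omega>)) \<partial>P)"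
    by (simp add: chaos_rv_def sum_product algebra_simps)
  also have "\<dots> = (\<Sum>i\<in>I. \<Sum>\<beta>\<in>?B. c i * v \<beta> * (if a i = \<beta> then mfact (a i) else 0))"
    using I v by (intro integral_chaos_bilinear) auto
  also have "\<dots> = (\<Sum>i\<in>I. c i * v (a i) * mfact (a i))"
  proof (rule sum.cong[OF refl])
    fix i
    assume "i \<in> I"
    have "(\<Sum>\<beta>\<in>?B. c i * v \<beta> * (if a i = \<beta> then mfact (a i) else 0))
        = (\<Sum>\<beta>\<in>?B. if \<beta> = a i then c i * v (a i) * mfact (a i) else 0)"
      by (rule sum.cong) auto
    also have "\<dots> = c i * v (a i) * mfact (a i)"
      using v I(2)[OF \<open>i \<in> I\<close>] by (simp add: sum.delta)
    finally show "(\<Sum>\<beta>\<in>?B. c i * v \<beta> * (if a i = \<beta> then mfact (a i) else 0)) = c i * v (a i) * mfact (a i)" .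
  qed
  finally show ?thesis .
qed

lemma integral_sq_chaos_sum_add_unit:
  assumes "\<alpha> \<in> multi_idx" "finite K"
  shows "(\<integral>\<omega>. (\<Sum>k\<in>K. c k * N (add_unit \<alpha> k) \<omega>)\<^sup>2 \<partial>P) = (\<Sum>k\<in>K. (c k)\<^sup>2 * mfact (add_unit \<alpha> k))"
proof -
  have "(\<integral>\<omega>. (\<Sum>k\<in>K. c k * N (add_unit \<alpha> k) \<omega>)\<^sup>2 \<partial>P)
      = (\<integral>\<omega>. (\<Sum>k\<in>K. \<Sum>j\<in>K. c k * c j * (N (add_unit \<alpha> k) \<omega> * N (add_unit \<alpha> j) \<omega>)) \<partial>P)"
    by (simp add: power2_eq_square sum_product algebra_simps)
  also have "\<dots> = (\<Sum>k\<in>K. \<Sum>j\<in>K. c k * c j * (if add_unit \<alpha> k = add_unit \<alpha> j then mfact (add_unit \<alpha> k) else 0))"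
    using assms by (intro integral_chaos_bilinear) (auto simp: add_unit_in_multi_idx)
  also have "\<dots> = (\<Sum>k\<in>K. (c k)\<^sup>2 * mfact (add_unit \<alpha> k))"
    using assms(2) by (simp add: if_distrib power2_eq_square cong: if_cong)
  finally show ?thesis .
qed

end

locale skorokhod_field = orthogonal_chaos P N for P :: "'w measure" and N +
  fixes M :: "'u measure" and m :: "nat \<Rightarrow> 'u \<Rightarrow> real" and u :: "(nat \<Rightarrow> nat) \<Rightarrow> 'u \<Rightarrow> real"
  assumes m_L2: "\<And>k. m k \<in> L2 M"
    and m_orthonormal: "\<And>k j. (\<integral>x. m k x * m j x \<partial>M) = (if k = j then 1 else 0)"
    and u_L2: "\<And>\<alpha>. \<alpha> \<in> multi_idx \<Longrightarrow> u \<alpha> \<in> L2 M"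
    and u_finite: "finite {\<alpha> \<in> multi_idx. u \<alpha> \<noteq> (\<lambda>_. 0)}"
begin

abbreviation u_support :: "(nat \<Rightarrow> nat) set" where
  "u_support \<equiv> {\<alpha> \<in> multi_idx. u \<alpha> \<noteq> (\<lambda>_. 0)}"

definition u_coeff :: "(nat \<Rightarrow> nat) \<Rightarrow> nat \<Rightarrow> real" where
  "u_coeff \<alpha> k = (\<integral>x. u \<alpha> x * m k x \<partial>M)"

lemma skorokhod_partial_eq:
  "skorokhod_partial M m N u n =
    (\<lambda>\<omega>. \<Sum>p\<in>u_support \<times> {..<n}. u_coeff (fst p) (snd p) * N (add_unit (fst p) (snd p)) \<omega>)"
  by (rule ext) (simp add: skorokhod_partial_def u_coeff_def sum.cartesian_product')

lemma skorokhod_partial_L2: "skorokhod_partial M m N u n \<in> L2 P"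
  unfolding skorokhod_partial_eq using u_finite by (intro chaos_sum_L2) (auto simp: add_unit_in_multi_idx)

lemma skorokhod_partial_diff:
  assumes "n \<le> p"
  shows "skorokhod_partial M m N u p \<omega> - skorokhod_partial M m N u n \<omega>
       = (\<Sum>\<alpha>\<in>u_support. \<Sum>k\<in>{n..<p}. u_coeff \<alpha> k * N (add_unit \<alpha> k) \<omega>)"
  using assms by (simp add: skorokhod_partial_def u_coeff_def sum_subtractf[symmetric]
      sum_diff_nat_ivl[of 0 n p, unfolded atLeast0LessThan])

lemma integral_sq_skorokhod_partial_diff_le:
  assumes "n \<le> p"
  shows "(\<integral>\<omega>. (skorokhod_partial M m N u p \<omega> - skorokhod_partial M m N u n \<omega>)\<^sup>2 \<partial>P)
       \<le> (\<Sum>k\<in>{n..<p}. card u_support * (\<Sum>\<alpha>\<in>u_support. mfact_bound \<alpha> * (u_coeff \<alpha> k)\<^sup>2))"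
proof -
  define T where "T \<alpha> \<omega> = (\<Sum>k\<in>{n..<p}. u_coeff \<alpha> k * N (add_unit \<alpha> k) \<omega>)" for \<alpha> \<omega>
  have T_L2: "T \<alpha> \<in> L2 P" if "\<alpha> \<in> u_support" for \<alpha>
    unfolding T_def using that by (intro chaos_sum_L2) (auto simp: add_unit_in_multi_idx)
  have "(\<integral>\<omega>. (skorokhod_partial M m N u p \<omega> - skorokhod_partial M m N u n \<omega>)\<^sup>2 \<partial>P)
      = (\<integral>\<omega>. (\<Sum>\<alpha>\<in>u_support. T \<alpha> \<omega>)\<^sup>2 \<partial>P)"
    using assms by (simp add: skorokhod_partial_diff T_def)
  also have "\<dots> \<le> (\<integral>\<omega>. (\<Sum>\<alpha>\<in>u_support. (T \<alpha> \<omega>)\<^sup>2) * card u_support \<partial>P)"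
    using T_L2 u_finite
    by (intro integral_mono sum_squared_le_sum_of_squares) (auto intro!: L2_square_integrable L2_sum)
  also have "\<dots> = card u_support * (\<Sum>\<alpha>\<in>u_support. \<integral>\<omega>. (T \<alpha> \<omega>)\<^sup>2 \<partial>P)"
    using T_L2 by (simp add: Bochner_Integration.integral_sum L2_square_integrable mult.commute)
  also have "\<dots> = card u_support * (\<Sum>\<alpha>\<in>u_support. \<Sum>k\<in>{n..<p}. (u_coeff \<alpha> k)\<^sup>2 * mfact (add_unit \<alpha> k))"
    by (simp add: T_def integral_sq_chaos_sum_add_unit)
  also have "\<dots> \<le> card u_support * (\<Sum>\<alpha>\<in>u_support. \<Sum>k\<in>{n..<p}. (u_coeff \<alpha> k)\<^sup>2 * mfact_bound \<alpha>)"
    by (intro mult_left_mono sum_mono mfact_add_unit_le) auto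
  also have "\<dots> = (\<Sum>k\<in>{n..<p}. card u_support * (\<Sum>\<alpha>\<in>u_support. mfact_bound \<alpha> * (u_coeff \<alpha> k)\<^sup>2))"
    by (simp add: sum_distrib_left sum.swap[of _ u_support] mult.commute)
  finally show ?thesis .
qed


lemma skorokhod_partial_Cauchy:
  assumes "e > 0"
  shows "\<exists>n0. \<forall>n\<ge>n0. \<forall>p\<ge>n0.
    (\<integral>\<omega>. (skorokhod_partial M m N u p \<omega> - skorokhod_partial M m N u n \<omega>)\<^sup>2 \<partial>P) < e"
proof -
  define G where "G k = card u_support * (\<Sum>\<alpha>\<in>u_support. mfact_bound \<alpha> * (u_coeff \<alpha> k)\<^sup>2)" for k
  have "summable G"
    unfolding G_def u_coeff_def
    by (intro summable_mult summable_sum summable_Fourier_coefficients_sq m_L2 m_orthonormal u_L2) auto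
  then obtain n0 where n0: "\<And>n p. n \<ge> n0 \<Longrightarrow> norm (sum G {n..<p}) < e"
    using assms unfolding summable_Cauchy by blast
  have close: "(\<integral>\<omega>. (skorokhod_partial M m N u p \<omega> - skorokhod_partial M m N u n \<omega>)\<^sup>2 \<partial>P) < e"
    if "n \<ge> n0" "n \<le> p" for n p
    using integral_sq_skorokhod_partial_diff_le[OF \<open>n \<le> p\<close>] n0[OF \<open>n \<ge> n0\<close>, of p]
    unfolding G_def by simp
  show ?thesis
  proof (intro exI allI impI)
    fix n p
    assume "n \<ge> n0" "p \<ge> n0"
    show "(\<integral>\<omega>. (skorokhod_partial M m N u p \<omega> - skorokhod_partial M m N u n \<omega>)\<^sup>2 \<partial>P) < e"
    proof (cases "n \<le> p")
      case False
      then show ?thesis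
        using close[OF \<open>p \<ge> n0\<close>, of n] by (simp add: power2_commute)
    qed (use close \<open>n \<ge> n0\<close> in blast)
  qed
qed

lemma skorokhod_limit:
  "skorokhod M P m N u \<in> L2 P \<and>
   (\<lambda>n. \<integral>\<omega>. (skorokhod M P m N u \<omega> - skorokhod_partial M m N u n \<omega>)\<^sup>2 \<partial>P) \<longlonglongrightarrow> 0"
  using L2_Cauchy_imp_convergent[OF skorokhod_partial_L2 skorokhod_partial_Cauchy]
  unfolding skorokhod_def by (rule someI_ex)

definition duality_pairing :: "((nat \<Rightarrow> nat) \<Rightarrow> real) \<Rightarrow> real" where
  "duality_pairing v = (\<Sum>p\<in>{p \<in> malliavin_support v. fst p \<in> u_support}.
     u_coeff (fst p) (snd p) * v (add_unit (fst p) (snd p)) * mfact (add_unit (fst p) (snd p)))"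

lemma integral_skorokhod_partial_mult_chaos_rv:
  assumes v: "finite {\<beta> \<in> multi_idx. v \<beta> \<noteq> 0}"
  shows "eventually (\<lambda>n. (\<integral>\<omega>. skorokhod_partial M m N u n \<omega> * chaos_rv N v \<omega> \<partial>P) = duality_pairing v)
    sequentially"
proof -
  define D where "D = {p \<in> malliavin_support v. fst p \<in> u_support}"
  have "finite D"
    unfolding D_def using finite_malliavin_support[OF v] by simp
  then obtain n0 where n0: "\<And>p. p \<in> D \<Longrightarrow> snd p < n0"
    by (metis finite_nat_set_iff_bounded finite_imageI imageI)
  show ?thesis
  proof (rule eventually_sequentiallyI[of n0])
    fix n
    assume "n0 \<le> n"
    have "(\<integral>\<omega>. skorokhod_partial M m N u n \<omega> * chaos_rv N v \<omega> \<partial>P)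
        = (\<Sum>p\<in>u_support \<times> {..<n}. u_coeff (fst p) (snd p) * v (add_unit (fst p) (snd p)) * mfact (add_unit (fst p) (snd p)))"
      unfolding skorokhod_partial_eq using u_finite v
      by (intro integral_chaos_sum_mult_chaos_rv) (auto simp: add_unit_in_multi_idx)
    also have "\<dots> = duality_pairing v"
      unfolding duality_pairing_def D_def[symmetric]
    proof (rule sum.mono_neutral_right)
      show "D \<subseteq> u_support \<times> {..<n}"
        using n0 \<open>n0 \<le> n\<close> by (force simp: D_def)
    qed (auto simp: u_finite D_def malliavin_support_def)
    finally show "(\<integral>\<omega>. skorokhod_partial M m N u n \<omega> * chaos_rv N v \<omega> \<partial>P) = duality_pairing v" .
  qed
qed

lemma integral_skorokhod_mult_chaos_rv:
  assumes v: "finite {\<beta> \<in> multi_idx. v \<beta> \<noteq> 0}"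
  shows "(\<integral>\<omega>. skorokhod M P m N u \<omega> * chaos_rv N v \<omega> \<partial>P) = duality_pairing v"
proof (rule LIMSEQ_unique)
  have "chaos_rv N v \<in> L2 P"
    unfolding chaos_rv_def using v by (intro chaos_sum_L2) auto
  then show "(\<lambda>n. \<integral>\<omega>. skorokhod_partial M m N u n \<omega> * chaos_rv N v \<omega> \<partial>P)
      \<longlonglongrightarrow> (\<integral>\<omega>. skorokhod M P m N u \<omega> * chaos_rv N v \<omega> \<partial>P)"
    using skorokhod_limit by (intro L2_inner_tendsto skorokhod_partial_L2) auto
  show "(\<lambda>n. \<integral>\<omega>. skorokhod_partial M m N u n \<omega> * chaos_rv N v \<omega> \<partial>P) \<longlonglongrightarrow> duality_pairing v"
    by (rule tendsto_eventually[OF integral_skorokhod_partial_mult_chaos_rv[OF v]])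
qed


lemma integral_chaos_field_mult_malliavin:
  assumes v: "finite {\<beta> \<in> multi_idx. v \<beta> \<noteq> 0}"
  shows "(\<integral>\<omega>. (\<integral>x. chaos_field N u x \<omega> * malliavin m N v x \<omega> \<partial>M) \<partial>P) = duality_pairing v"
proof -
  define C where "C = malliavin_support v"
  define R where "R p = real (fst p (snd p) + 1) * v (add_unit (fst p) (snd p))" for p :: "(nat \<Rightarrow> nat) \<times> nat"
  have C: "finite C" "\<And>p. p \<in> C \<Longrightarrow> fst p \<in> multi_idx"
    using finite_malliavin_support[OF v] by (auto simp: C_def malliavin_support_def)
  have malliavin_eq: "malliavin m N v x \<omega> = (\<Sum>p\<in>C. R p * m (snd p) x * N (fst p) \<omega>)" for x \<omega>
    by (simp add: malliavin_def C_def malliavin_support_def R_def split_beta)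
  have inner: "(\<integral>x. chaos_field N u x \<omega> * malliavin m N v x \<omega> \<partial>M)
      = (\<Sum>\<alpha>\<in>u_support. \<Sum>p\<in>C. u_coeff \<alpha> (snd p) * R p * (N \<alpha> \<omega> * N (fst p) \<omega>))" for \<omega>
  proof -
    have "(\<lambda>x. chaos_field N u x \<omega> * malliavin m N v x \<omega>)
        = (\<lambda>x. \<Sum>\<alpha>\<in>u_support. \<Sum>p\<in>C. (u \<alpha> x * m (snd p) x) * (R p * (N \<alpha> \<omega> * N (fst p) \<omega>)))"
      by (simp add: chaos_field_def malliavin_eq sum_distrib_left sum_distrib_right algebra_simps)
    then show ?thesis
      using u_L2 m_L2 by (simp add: Bochner_Integration.integral_sum L2_mult_integrable u_coeff_def) (simp only: mult.assoc)
  qed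
  have "(\<integral>\<omega>. (\<integral>x. chaos_field N u x \<omega> * malliavin m N v x \<omega> \<partial>M) \<partial>P)
      = (\<Sum>\<alpha>\<in>u_support. \<Sum>p\<in>C. u_coeff \<alpha> (snd p) * R p * (if \<alpha> = fst p then mfact \<alpha> else 0))"
    unfolding inner using u_finite C by (intro integral_chaos_bilinear) auto
  also have "\<dots> = (\<Sum>p\<in>C. \<Sum>\<alpha>\<in>u_support. if \<alpha> = fst p then u_coeff (fst p) (snd p) * R p * mfact (fst p) else 0)"
    by (subst sum.swap) (auto intro!: sum.cong)
  also have "\<dots> = (\<Sum>p\<in>C. if fst p \<in> u_support then u_coeff (fst p) (snd p) * R p * mfact (fst p) else 0)"
    using u_finite by (simp add: sum.delta')
  also have "\<dots> = duality_pairing v"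
    using C by (simp add: duality_pairing_def C_def[symmetric] sum.inter_filter R_def mfact_add_unit mult_ac cong: if_cong)
  finally show ?thesis .
qed

end

theorem proposition8:
  fixes M :: "'u measure" and P :: "'w measure"
    and m :: "nat \<Rightarrow> 'u \<Rightarrow> real"
    and Nfrak :: "('u \<Rightarrow> real) \<Rightarrow> 'w \<Rightarrow> real"
    and N :: "(nat \<Rightarrow> nat) \<Rightarrow> 'w \<Rightarrow> real"
    and u :: "(nat \<Rightarrow> nat) \<Rightarrow> 'u \<Rightarrow> real"
    and v :: "(nat \<Rightarrow> nat) \<Rightarrow> real"
  assumes M_sf: "sigma_finite_measure M"
    and M_complete: "complete_measure M"
    and m_L2: "\<And>k. m k \<in> L2 M"
    and m_orthonormal: "\<And>k j. (\<integral>x. m k x * m j x \<partial>M) = (if k = j then 1 else 0)"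
    and m_complete: "\<And>f. f \<in> L2 M \<Longrightarrow> (\<forall>k. (\<integral>x. f x * m k x \<partial>M) = 0) \<Longrightarrow> AE x in M. f x = 0"
    and P_prob: "prob_space P"
    and Nfrak_L2: "\<And>f. f \<in> L2 M \<Longrightarrow> Nfrak f \<in> L2 P"
    and Nfrak_linear: "\<And>f g a b. f \<in> L2 M \<Longrightarrow> g \<in> L2 M \<Longrightarrow>
          AE \<omega> in P. Nfrak (\<lambda>x. a * f x + b * g x) \<omega> = a * Nfrak f \<omega> + b * Nfrak g \<omega>"
    and Nfrak_mean_zero: "\<And>f. f \<in> L2 M \<Longrightarrow> (\<integral>\<omega>. Nfrak f \<omega> \<partial>P) = 0"
    and Nfrak_isometry: "\<And>f g. f \<in> L2 M \<Longrightarrow> g \<in> L2 M \<Longrightarrow>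
          (\<integral>\<omega>. Nfrak f \<omega> * Nfrak g \<omega> \<partial>P) = (\<integral>x. f x * g x \<partial>M)"
    and N_L2: "\<And>\<alpha>. \<alpha> \<in> multi_idx \<Longrightarrow> N \<alpha> \<in> L2 P"
    and N_orth: "\<And>\<alpha> \<beta>. \<alpha> \<in> multi_idx \<Longrightarrow> \<beta> \<in> multi_idx \<Longrightarrow>
          (\<integral>\<omega>. N \<alpha> \<omega> * N \<beta> \<omega> \<partial>P) = (if \<alpha> = \<beta> then mfact \<alpha> else 0)"
    and N_zero: "\<And>\<omega>. N (\<lambda>_. 0) \<omega> = 1"
    and N_unit: "\<And>k. N (add_unit (\<lambda>_. 0) k) = Nfrak (m k)"
    and u_L2: "\<And>\<alpha>. \<alpha> \<in> multi_idx \<Longrightarrow> u \<alpha> \<in> L2 M"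
    and u_fin: "finite {\<alpha> \<in> multi_idx. u \<alpha> \<noteq> (\<lambda>_. 0)}"
    and v_fin: "finite {\<alpha> \<in> multi_idx. v \<alpha> \<noteq> 0}"
  shows "(\<integral>\<omega>. skorokhod M P m N u \<omega> * chaos_rv N v \<omega> \<partial>P) =
         (\<integral>\<omega>. (\<integral>x. chaos_field N u x \<omega> * malliavin m N v x \<omega> \<partial>M) \<partial>P)"
proof -
  interpret skorokhod_field P N M m u
    using P_prob N_L2 N_orth m_L2 m_orthonormal u_L2 u_fin
    by (simp add: skorokhod_field_def skorokhod_field_axioms_def
        orthogonal_chaos_def orthogonal_chaos_axioms_def)
  show ?thesis
    using integral_skorokhod_mult_chaos_rv[OF v_fin] integral_chaos_field_mult_malliavin[OF v_fin]
    by simp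
qed

end
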